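(* Let $f:\mathbb{R}^n\to\mathbb{R}\cup\{+\infty\}$ be a polyhedral M-convex function with bounded $\operatorname{dom}_{\mathbb{R}} f$, and $y\in\operatorname{dom}_{\mathbb{R}} f$ with $\phi_{\mathbb{R}}(y)<0$. Let $i\in N$ satisfy $f'_{\mathbb{R}}(y;i,j)>\phi_{\mathbb{R}}(y)$ for all $j\in N\setminus\{i\}$, let $h,k\in N$ be distinct with $f'_{\mathbb{R}}(y;h,k)=\phi_{\mathbb{R}}(y)$, and let $0<\lambda\le\bar c_{\mathbb{R}}(y;h,k)$. Then $\hat y:=y+\lambda(\chi_h-\chi_k)$ satisfies $f'_{\mathbb{R}}(\hat y;i,j)>\phi_{\mathbb{R}}(y)$ for every $j\in N\setminus\{i\}$.
   Context: $N=\{1,\dots,n\}$; $\chi_i$ is the $i$-th unit vector. $\operatorname{dom}_{\mathbb{R}} f=\{x\in\mathbb{R}^n:f(x)<+\infty\}$. A polyhedral convex function $f:\mathbb{R}^n\to\mathbb{R}\cup\{+\infty\}$ (epigraph a polyhedron, $\operatorname{dom}_{\mathbb{R}} f\neq\emptyset$) is M-convex if for all $x,y\in\operatorname{dom}_{\mathbb{R}} f$ and every $i$ with $x(i)>y(i)$ there exist $j$ with $x(j)<y(j)$ and $\epsilon_0>0$ such that $f(x)+f(y)\ge f(x-\epsilon(\chi_i-\chi_j))+f(y+\epsilon(\chi_i-\chi_j))$ for all $\epsilon\in[0,\epsilon_0]$. For $x\in\operatorname{dom}_{\mathbb{R}} f$, $f'_{\mathbb{R}}(x;i,j)=\lim_{\alpha\downarrow0}(f(x+\alpha(\chi_i-\chi_j))-f(x))/\alpha$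 (possibly $+\infty$), $\phi_{\mathbb{R}}(x)=\min_{i,j\in N}f'_{\mathbb{R}}(x;i,j)$, and for finite $f'_{\mathbb{R}}(x;i,j)$, $\bar c_{\mathbb{R}}(x;i,j)=\max\{\lambda\ge0: f(x+\lambda(\chi_i-\chi_j))-f(x)=\lambda f'_{\mathbb{R}}(x;i,j)\}$. *)

theory Defs
  imports "HOL-Analysis.Analysis" "HOL-Library.Extended_Real"
begin

text \<open>Functions R^n -> R \<union> {+\<infinity>} are modelled as f :: real^'n \<Rightarrow> ereal never taking -\<infinity>;
  the ground set N is the finite index type 'n.\<close>

definition unitv :: "'n::finite \<Rightarrow> real^'n" where
  "unitv i = axis i 1"

definition domR :: "(real^'n::finite \<Rightarrow> ereal) \<Rightarrow> (real^'n) set" where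
  "domR f = {x. f x < \<infinity>}"

definition epigraph :: "(real^'n::finite \<Rightarrow> ereal) \<Rightarrow> ((real^'n) \<times> real) set" where
  "epigraph f = {(x, t). f x \<le> ereal t}"

definition polyhedral_convex :: "(real^'n::finite \<Rightarrow> ereal) \<Rightarrow> bool" where
  "polyhedral_convex f \<longleftrightarrow> (\<forall>x. f x \<noteq> -\<infinity>) \<and> polyhedron (epigraph f) \<and> domR f \<noteq> {}"

definition M_convex :: "(real^'n::finite \<Rightarrow> ereal) \<Rightarrow> bool" where
  "M_convex f \<longleftrightarrow> polyhedral_convex f \<and>
     (\<forall>x\<in>domR f. \<forall>y\<in>domR f. \<forall>i. x$i > y$i \<longrightarrow>
        (\<exists>j. x$j < y$j \<and> (\<exists>\<epsilon>0>0. \<forall>\<epsilon>\<in>{0..\<epsilon>0}.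
           f x + f y \<ge> f (x - \<epsilon> *\<^sub>R (unitv i - unitv j)) + f (y + \<epsilon> *\<^sub>R (unitv i - unitv j)))))"

definition dderiv :: "(real^'n::finite \<Rightarrow> ereal) \<Rightarrow> real^'n \<Rightarrow> 'n \<Rightarrow> 'n \<Rightarrow> ereal" where
  "dderiv f x i j = Lim (at_right 0)
     (\<lambda>\<alpha>::real. (f (x + \<alpha> *\<^sub>R (unitv i - unitv j)) - f x) / ereal \<alpha>)"

definition phiR :: "(real^'n::finite \<Rightarrow> ereal) \<Rightarrow> real^'n \<Rightarrow> ereal" where
  "phiR f x = Min {dderiv f x i j | i j. True}"

definition cbarR :: "(real^'n::finite \<Rightarrow> ereal) \<Rightarrow> real^'n \<Rightarrow> 'n \<Rightarrow> 'n \<Rightarrow> real" where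
  "cbarR f x i j = (GREATEST c::real. c \<ge> 0 \<and>
     f (x + c *\<^sub>R (unitv i - unitv j)) - f x = ereal c * dderiv f x i j)"

end

theory Submission
  imports Defs
begin

text \<open>
  A polyhedral f is the maximum of finitely many affine pieces on a polyhedron D. Near a point
  y of D it therefore agrees with f y + f'(y; w), where the local slope f'(y; w) is the largest
  slope of the pieces active at y, for w in the tangent cone of D at y, and +\<infinity> outside it.
  M-convexity passes to this positively homogeneous slope function as an exchange inequality;
  minimising over the compact set of balanced vectors of unit mass then shows that f'(y; w)
  dominates the sum of beta p * w p over the positive support of w, as soon as every
  elementary direction chi p - chi c from the positive to the negative support has slope at
  least beta p.

  Between y and y' = y + lam (chi h - chi k) the function is affine with slope phi = phi(y),
  because lam does not exceed cbar(y; h, k) (boundedness of the domain makes cbar attained).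
  If f'(y'; i, j) \<le> phi, then the step lam (chi h - chi k) + eps (chi i - chi j) from y costs
  at most (lam + eps) phi. The exchange inequality, with beta i strictly above phi (i is not
  steepest at y) and beta p = phi otherwise, bounds the same cost strictly from below by
  (lam + eps) phi.
\<close>

lemma unitv_nth: "unitv a $ x = (if x = a then 1 else 0)"
  by (simp add: unitv_def axis_def)

lemma ereal_eq_if_upper_bounds:
  fixes e :: ereal
  assumes "e \<noteq> -\<infinity>" "\<And>t. e \<le> ereal t \<longleftrightarrow> P \<and> r \<le> t"
  shows "e = (if P then ereal r else \<infinity>)"
proof (cases e)
  case (real s)
  then show ?thesis
    using assms(2)[of s] assms(2)[of r] by auto
qed (use assms in auto)

lemma polyhedral_convex_finite_value:
  assumes "polyhedral_convex f"
  obtains x t where "f x = ereal t"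
proof -
  from assms obtain x where "f x < \<infinity>" "f x \<noteq> -\<infinity>"
    unfolding polyhedral_convex_def domR_def by auto
  then show thesis
    using that by (cases "f x") auto
qed

lemma polyhedral_convex_epigraph_inequalities:
  fixes f :: "real^'n::finite \<Rightarrow> ereal"
  assumes "polyhedral_convex f"
  obtains F :: "((real^'n) \<times> real) set set" and c A B
  where "finite F" "\<And>h. h \<in> F \<Longrightarrow> c h \<le> 0"
    "\<And>x t. f x \<le> ereal t \<longleftrightarrow> (\<forall>h\<in>F. A h \<bullet> x + c h * t \<le> B h)"
proof -
  from assms have "polyhedron (epigraph f)"
    unfolding polyhedral_convex_def by auto
  then obtain F where fin: "finite F" and epi: "epigraph f = \<Inter>F"
    and "\<forall>h\<in>F. \<exists>a b. a \<noteq> 0 \<and> h = {x. a \<bullet> x \<le> b}"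
    unfolding polyhedron_def by auto
  then obtain N B where NB: "\<And>h. h \<in> F \<Longrightarrow> h = {z. N h \<bullet> z \<le> B h}" by metis
  define A where "A h = fst (N h)" for h
  define c where "c h = snd (N h)" for h
  have mem: "f x \<le> ereal t \<longleftrightarrow> (\<forall>h\<in>F. A h \<bullet> x + c h * t \<le> B h)" for x t
  proof -
    have "f x \<le> ereal t \<longleftrightarrow> (\<forall>h\<in>F. (x, t) \<in> h)"
      using epi unfolding epigraph_def by blast
    also have "\<dots> \<longleftrightarrow> (\<forall>h\<in>F. N h \<bullet> (x, t) \<le> B h)"
      using NB by blast
    finally show ?thesis
      unfolding A_def c_def by (simp add: inner_Pair_0 inner_prod_def)
  qed
  obtain x0 t0 where t0: "f x0 = ereal t0"
    using polyhedral_convex_finite_value[OF assms] .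
  have c_nonpos: "c h \<le> 0" if "h \<in> F" for h
  proof (rule ccontr)
    assume pos: "\<not> c h \<le> 0"
    \<comment> \<open>the epigraph contains the vertical ray above x0, a halfspace with c h > 0 does not\<close>
    define t where "t = max t0 ((B h - A h \<bullet> x0) / c h + 1)"
    have "A h \<bullet> x0 + c h * t \<le> B h"
      using mem[of x0 t] t0 that by (simp add: t_def)
    moreover have "c h * t \<ge> c h * ((B h - A h \<bullet> x0) / c h + 1)"
      using pos by (intro mult_left_mono) (auto simp: t_def)
    moreover have "c h * ((B h - A h \<bullet> x0) / c h + 1) = B h - A h \<bullet> x0 + c h"
      using pos by (simp add: field_simps)
    ultimately show False
      using pos by linarith
  qed
  from that[OF fin c_nonpos mem] show thesis .
qed

lemma polyhedral_convex_max_affine: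
  fixes f :: "real^'n::finite \<Rightarrow> ereal"
  assumes "polyhedral_convex f"
  obtains J :: "((real^'n) \<times> real) set set" and u v and K :: "((real^'n) \<times> real) set set" and a b
  where "finite J" "J \<noteq> {}" "finite K"
    "\<And>x. f x = (if \<forall>l\<in>K. a l \<bullet> x \<le> b l then ereal (Max ((\<lambda>l. u l \<bullet> x + v l) ` J)) else \<infinity>)"
proof -
  from assms have ninf: "\<And>x. f x \<noteq> -\<infinity>"
    unfolding polyhedral_convex_def by auto
  obtain F :: "((real^'n) \<times> real) set set" and c A B where fin: "finite F"
    and c: "\<And>h. h \<in> F \<Longrightarrow> c h \<le> 0"
    and mem: "\<And>x t. f x \<le> ereal t \<longleftrightarrow> (\<forall>h\<in>F. A h \<bullet> x + c h * t \<le> B h)"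
    using polyhedral_convex_epigraph_inequalities[OF assms] by metis
  define J where "J = {h\<in>F. c h < 0}"
  define K where "K = {h\<in>F. c h = 0}"
  define u where "u h = (- 1 / c h) *\<^sub>R A h" for h
  define v where "v h = B h / c h" for h
  define g where "g x = Max ((\<lambda>l. u l \<bullet> x + v l) ` J)" for x
  have fin_JK: "finite J" "finite K"
    using fin by (auto simp: J_def K_def)
  have piece_J: "A h \<bullet> x + c h * t \<le> B h \<longleftrightarrow> u h \<bullet> x + v h \<le> t" if "h \<in> J" for h x t
    using that by (auto simp: J_def u_def v_def field_simps)
  have split_F: "(\<forall>h\<in>F. A h \<bullet> x + c h * t \<le> B h) \<longleftrightarrow>
      (\<forall>h\<in>K. A h \<bullet> x \<le> B h) \<and> (\<forall>h\<in>J. A h \<bullet> x + c h * t \<le> B h)" for x t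
  proof -
    have F_eq: "F = J \<union> K"
      using c by (auto simp: J_def K_def le_less)
    show ?thesis
      unfolding F_eq ball_Un by (auto simp: K_def)
  qed
  have mem': "f x \<le> ereal t \<longleftrightarrow> (\<forall>l\<in>K. A l \<bullet> x \<le> B l) \<and> (\<forall>l\<in>J. u l \<bullet> x + v l \<le> t)"
    for x t
    unfolding mem split_F using piece_J by blast
  have "J \<noteq> {}"
  proof
    assume "J = {}"
    obtain x0 t0 where "f x0 = ereal t0"
      using polyhedral_convex_finite_value[OF assms] .
    with \<open>J = {}\<close> have "f x0 \<le> ereal t" for t
      using mem'[of x0 t] mem'[of x0 t0] by auto
    then have "f x0 = -\<infinity>"
      by (rule ereal_bot)
    with ninf show False
      by blast
  qed
  have "f x = (if \<forall>l\<in>K. A l \<bullet> x \<le> B l then ereal (g x) else \<infinity>)" for x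
  proof -
    have le: "f x \<le> ereal t \<longleftrightarrow> (\<forall>l\<in>K. A l \<bullet> x \<le> B l) \<and> g x \<le> t" for t
      unfolding mem' g_def using fin_JK \<open>J \<noteq> {}\<close> by (simp add: Max_le_iff)
    show ?thesis
      using ereal_eq_if_upper_bounds[OF ninf le] .
  qed
  from that[OF fin_JK(1) \<open>J \<noteq> {}\<close> fin_JK(2) this[unfolded g_def]] show thesis .
qed

lemma continuous_on_Max_image:
  fixes h :: "'a \<Rightarrow> 'b::topological_space \<Rightarrow> real"
  assumes "finite A" "A \<noteq> {}" "\<And>l. l \<in> A \<Longrightarrow> continuous_on S (h l)"
  shows "continuous_on S (\<lambda>w. Max ((\<lambda>l. h l w) ` A))"
  using assms
proof (induction A rule: finite_ne_induct)
  case (insert l A)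
  then have "(\<lambda>w. Max ((\<lambda>l. h l w) ` insert l A)) = (\<lambda>w. max (h l w) (Max ((\<lambda>l. h l w) ` A)))"
    by auto
  with insert show ?case
    by (auto intro: continuous_on_max)
qed simp

lemma affine_nonpos_between:
  fixes X W c l :: real
  assumes "X \<le> 0" "X + c * W \<le> 0" "0 \<le> l" "l \<le> c"
  shows "X + l * W \<le> 0"
proof (cases "W \<le> 0")
  case True
  then show ?thesis
    using assms(1,3) by (simp add: mult_nonneg_nonpos add_nonpos_nonpos)
next
  case False
  then have "l * W \<le> c * W"
    using assms(4) by (simp add: mult_right_mono)
  then show ?thesis
    using assms(2) by simp
qed

locale max_affine =
  fixes f :: "real^'n::finite \<Rightarrow> ereal"
    and J :: "'j set" and u :: "'j \<Rightarrow> real^'n" and v :: "'j \<Rightarrow> real"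
    and K :: "'k set" and a :: "'k \<Rightarrow> real^'n" and b :: "'k \<Rightarrow> real"
  assumes finite_J: "finite J" and J_nonempty: "J \<noteq> {}" and finite_K: "finite K"
    and f_max_affine:
      "\<And>x. f x = (if \<forall>l\<in>K. a l \<bullet> x \<le> b l then ereal (Max ((\<lambda>l. u l \<bullet> x + v l) ` J)) else \<infinity>)"
begin

definition D :: "(real^'n) set" where
  "D = {x. \<forall>l\<in>K. a l \<bullet> x \<le> b l}"

definition g :: "real^'n \<Rightarrow> real" where
  "g x = Max ((\<lambda>l. u l \<bullet> x + v l) ` J)"

definition active :: "real^'n \<Rightarrow> 'j set" where
  "active x = {l\<in>J. u l \<bullet> x + v l = g x}"

definition tight :: "real^'n \<Rightarrow> 'k set" where
  "tight x = {l\<in>K. a l \<bullet> x = b l}"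

definition tangent_cone :: "real^'n \<Rightarrow> (real^'n) set" where
  "tangent_cone x = {w. \<forall>l\<in>tight x. a l \<bullet> w \<le> 0}"

definition slope :: "real^'n \<Rightarrow> real^'n \<Rightarrow> real" where
  "slope x w = Max ((\<lambda>l. u l \<bullet> w) ` active x)"

lemma f_eq: "f x = (if x \<in> D then ereal (g x) else \<infinity>)"
  using f_max_affine[of x] unfolding D_def g_def by simp

lemma domR_eq: "domR f = D"
  unfolding domR_def using f_eq by auto

lemma g_le_iff: "g x \<le> t \<longleftrightarrow> (\<forall>l\<in>J. u l \<bullet> x + v l \<le> t)"
  unfolding g_def using finite_J J_nonempty by (simp add: Max_le_iff)

lemma affine_le_g: "l \<in> J \<Longrightarrow> u l \<bullet> x + v l \<le> g x"
  using g_le_iff by blast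

lemma finite_active: "finite (active x)"
  unfolding active_def using finite_J by auto

lemma active_nonempty: "active x \<noteq> {}"
proof -
  have "g x \<in> (\<lambda>l. u l \<bullet> x + v l) ` J"
    unfolding g_def using finite_J J_nonempty by (intro Max_in) auto
  then show ?thesis
    unfolding active_def by auto
qed

lemma slope_ge: "l \<in> active x \<Longrightarrow> u l \<bullet> w \<le> slope x w"
  unfolding slope_def using finite_active by auto

lemma slope_attained: "\<exists>l\<in>active x. slope x w = u l \<bullet> w"
proof -
  have "slope x w \<in> (\<lambda>l. u l \<bullet> w) ` active x"
    unfolding slope_def using finite_active active_nonempty by (intro Max_in) auto
  then show ?thesis
    by auto
qed

lemma slope_scaleR: "0 \<le> t \<Longrightarrow> slope x (t *\<^sub>R w) = t * slope x w"
  using mono_Max_commute[of "(*) t" "(\<lambda>l. u l \<bullet> w) ` active x"] finite_active active_nonempty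
  by (simp add: slope_def image_image mono_def mult_left_mono)

lemma continuous_on_slope: "continuous_on S (slope x)"
  unfolding slope_def[abs_def]
  by (intro continuous_on_Max_image finite_active active_nonempty continuous_intros)

lemma tangent_cone_scaleR_iff: "0 < t \<Longrightarrow> t *\<^sub>R w \<in> tangent_cone x \<longleftrightarrow> w \<in> tangent_cone x"
  unfolding tangent_cone_def by (auto simp: mult_le_0_iff)

lemma tangent_cone_scaleR: "0 \<le> t \<Longrightarrow> w \<in> tangent_cone x \<Longrightarrow> t *\<^sub>R w \<in> tangent_cone x"
  unfolding tangent_cone_def by (auto simp: mult_le_0_iff)

lemma closed_tangent_cone: "closed (tangent_cone x)"
proof -
  have "tangent_cone x = (\<Inter>l\<in>tight x. {w. a l \<bullet> w \<le> 0})"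
    unfolding tangent_cone_def by auto
  then show ?thesis
    by (simp add: closed_INT closed_halfspace_le)
qed

lemma diff_in_tangent_cone: "x \<in> D \<Longrightarrow> x + w \<in> D \<Longrightarrow> w \<in> tangent_cone x"
  unfolding tangent_cone_def tight_def D_def by (auto simp: inner_add_right)

lemma g_add_ge: "g x + slope x w \<le> g (x + w)"
proof -
  obtain l where "l \<in> active x" "slope x w = u l \<bullet> w"
    using slope_attained by blast
  then show ?thesis
    using affine_le_g[of l "x + w"] by (auto simp: active_def inner_add_right)
qed

lemma eventually_D_iff_tangent_cone:
  assumes "x \<in> D"
  shows "\<forall>\<^sub>F w in nhds 0. x + w \<in> D \<longleftrightarrow> w \<in> tangent_cone x"
proof -
  have "\<forall>\<^sub>F w in nhds 0. a l \<bullet> (x + w) < b l" if "l \<in> K - tight x" for l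
  proof (rule order_tendstoD(2))
    show "((\<lambda>w. a l \<bullet> (x + w)) \<longlongrightarrow> a l \<bullet> (x + 0)) (nhds 0)"
      by (intro tendsto_intros filterlim_ident)
    show "a l \<bullet> (x + 0) < b l"
      using assms that unfolding D_def tight_def by force
  qed
  then have "\<forall>\<^sub>F w in nhds 0. \<forall>l\<in>K - tight x. a l \<bullet> (x + w) < b l"
    using finite_K by (intro eventually_ball_finite) auto
  then show ?thesis
  proof (rule eventually_mono)
    fix w assume slack: "\<forall>l\<in>K - tight x. a l \<bullet> (x + w) < b l"
    have "a l \<bullet> (x + w) \<le> b l" if "l \<in> K" "w \<in> tangent_cone x" for l
      using that slack[rule_format, of l]
      by (cases "l \<in> tight x") (auto simp: tangent_cone_def tight_def inner_add_right)
    then show "x + w \<in> D \<longleftrightarrow> w \<in> tangent_cone x"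
      using assms diff_in_tangent_cone by (auto simp: D_def)
  qed
qed

lemma eventually_g_add_eq: "\<forall>\<^sub>F w in nhds 0. g (x + w) = g x + slope x w"
proof -
  obtain l0 where l0: "l0 \<in> active x"
    using active_nonempty by blast
  have "\<forall>\<^sub>F w in nhds 0. u l \<bullet> (x + w) + v l < u l0 \<bullet> (x + w) + v l0" if "l \<in> J - active x" for l
  proof -
    have "((\<lambda>w. (u l \<bullet> (x + w) + v l) - (u l0 \<bullet> (x + w) + v l0)) \<longlongrightarrow>
        (u l \<bullet> (x + 0) + v l) - (u l0 \<bullet> (x + 0) + v l0)) (nhds 0)"
      by (intro tendsto_intros filterlim_ident)
    moreover have "(u l \<bullet> (x + 0) + v l) - (u l0 \<bullet> (x + 0) + v l0) < 0"
      using that l0 affine_le_g[of l x] unfolding active_def by force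
    ultimately have "\<forall>\<^sub>F w in nhds 0. (u l \<bullet> (x + w) + v l) - (u l0 \<bullet> (x + w) + v l0) < 0"
      by (rule order_tendstoD(2))
    then show ?thesis
      by (rule eventually_mono) simp
  qed
  then have "\<forall>\<^sub>F w in nhds 0. \<forall>l\<in>J - active x. u l \<bullet> (x + w) + v l < u l0 \<bullet> (x + w) + v l0"
    using finite_J by (intro eventually_ball_finite) auto
  then show ?thesis
  proof (rule eventually_mono)
    fix w assume dominated: "\<forall>l\<in>J - active x. u l \<bullet> (x + w) + v l < u l0 \<bullet> (x + w) + v l0"
    have on_active: "u l \<bullet> (x + w) + v l = g x + u l \<bullet> w" if "l \<in> active x" for l
      using that by (auto simp: active_def inner_add_right)
    have "u l \<bullet> (x + w) + v l \<le> g x + slope x w" if "l \<in> J" for l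
    proof (cases "l \<in> active x")
      case True
      then show ?thesis
        using on_active[OF True] slope_ge[OF True, of w] by simp
    next
      case False
      then have "u l \<bullet> (x + w) + v l < u l0 \<bullet> (x + w) + v l0"
        using dominated that by blast
      also have "\<dots> \<le> g x + slope x w"
        using on_active[OF l0] slope_ge[OF l0] by simp
      finally show ?thesis
        by simp
    qed
    then show "g (x + w) = g x + slope x w"
      using g_add_ge[of x w] by (intro antisym) (simp_all add: g_le_iff)
  qed
qed

lemma eventually_ray_expansion:
  assumes "x \<in> D"
  shows "\<forall>\<^sub>F \<alpha> in at_right 0. (x + \<alpha> *\<^sub>R w \<in> D \<longleftrightarrow> w \<in> tangent_cone x) \<and>
    g (x + \<alpha> *\<^sub>R w) = g x + \<alpha> * slope x w"
proof -
  have "((\<lambda>\<alpha>::real. \<alpha> *\<^sub>R w) \<longlongrightarrow> 0) (at_right 0)"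
    by (intro tendsto_eq_intros filterlim_ident) auto
  then have "\<forall>\<^sub>F \<alpha> in at_right 0. (x + \<alpha> *\<^sub>R w \<in> D \<longleftrightarrow> \<alpha> *\<^sub>R w \<in> tangent_cone x) \<and>
      g (x + \<alpha> *\<^sub>R w) = g x + slope x (\<alpha> *\<^sub>R w)"
    by (rule eventually_compose_filterlim[OF
          eventually_conj[OF eventually_D_iff_tangent_cone[OF assms] eventually_g_add_eq]])
  with eventually_at_right_less[of 0] show ?thesis
    by eventually_elim (simp add: tangent_cone_scaleR_iff slope_scaleR)
qed

lemma dderiv_eq:
  assumes "x \<in> D"
  shows "dderiv f x i j =
    (if unitv i - unitv j \<in> tangent_cone x then ereal (slope x (unitv i - unitv j)) else \<infinity>)"
proof -
  let ?d = "unitv i - unitv j"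
  have "\<forall>\<^sub>F \<alpha> in at_right 0. (f (x + \<alpha> *\<^sub>R ?d) - f x) / ereal \<alpha> =
      (if ?d \<in> tangent_cone x then ereal (slope x ?d) else \<infinity>)"
    using eventually_ray_expansion[OF assms] eventually_at_right_less[of 0]
    by eventually_elim (use assms in \<open>auto simp: f_eq\<close>)
  then show ?thesis
    unfolding dderiv_def
    by (intro tendsto_Lim trivial_limit_at_right_real tendsto_eventually)
qed

lemma phiR_le_slope:
  assumes "x \<in> D" "unitv p - unitv c \<in> tangent_cone x"
  shows "phiR f x \<le> ereal (slope x (unitv p - unitv c))"
proof -
  have "finite {dderiv f x i j | i j. True}"
    by (rule finite_subset[of _ "(\<lambda>(i, j). dderiv f x i j) ` UNIV"]) auto
  then have "phiR f x \<le> dderiv f x p c"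
    unfolding phiR_def by (rule Min_le) auto
  with assms show ?thesis
    by (simp add: dderiv_eq)
qed

lemma slope_margin:
  assumes "x \<in> D" "\<forall>j. j \<noteq> i \<longrightarrow> dderiv f x i j > ereal \<phi>"
  obtains \<mu> where "\<phi> < \<mu>"
    "\<And>c. c \<noteq> i \<Longrightarrow> unitv i - unitv c \<in> tangent_cone x \<Longrightarrow> \<mu> \<le> slope x (unitv i - unitv c)"
proof
  let ?S = "{slope x (unitv i - unitv c) | c. c \<noteq> i \<and> unitv i - unitv c \<in> tangent_cone x}"
  have "finite ?S"
    by (rule finite_subset[of _ "(\<lambda>c. slope x (unitv i - unitv c)) ` UNIV"]) auto
  moreover have "\<phi> < t" if "t \<in> ?S" for t
    using that assms by (auto simp: dderiv_eq)
  ultimately show "\<phi> < Min (insert (\<phi> + 1) ?S)"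
    by simp
  show "Min (insert (\<phi> + 1) ?S) \<le> slope x (unitv i - unitv c)"
    if "c \<noteq> i" "unitv i - unitv c \<in> tangent_cone x" for c
    using \<open>finite ?S\<close> that by (intro Min_le) auto
qed

definition linear_range :: "real^'n \<Rightarrow> real^'n \<Rightarrow> real set" where
  "linear_range y d = {c. 0 \<le> c \<and> y + c *\<^sub>R d \<in> D \<and> g (y + c *\<^sub>R d) \<le> g y + c * slope y d}"

lemma linear_range_downward_closed:
  assumes y: "y \<in> D" and c: "c \<in> linear_range y d" and "0 \<le> lam" "lam \<le> c"
  shows "lam \<in> linear_range y d"
proof -
  \<comment> \<open>every constraint defining the range is affine in c and holds at c = 0\<close>
  have "a l \<bullet> (y + lam *\<^sub>R d) \<le> b l" if "l \<in> K" for l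
    using affine_nonpos_between[of "a l \<bullet> y - b l" c "a l \<bullet> d" lam] y c assms(3,4) that
    by (auto simp: linear_range_def D_def inner_add_right algebra_simps)
  moreover have "u l \<bullet> (y + lam *\<^sub>R d) + v l \<le> g y + lam * slope y d" if "l \<in> J" for l
    using affine_nonpos_between[of "u l \<bullet> y + v l - g y" c "u l \<bullet> d - slope y d" lam]
      affine_le_g[OF that, of y] c assms(3,4) that
    by (auto simp: linear_range_def g_le_iff inner_add_right algebra_simps)
  ultimately show ?thesis
    using assms(3) by (simp add: linear_range_def D_def g_le_iff)
qed

lemma cbarR_eq_Sup_linear_range:
  assumes bdd: "bounded D" and y: "y \<in> D" and "h \<noteq> k"
    and d: "unitv h - unitv k \<in> tangent_cone y"
  defines "d \<equiv> unitv h - unitv k"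
  shows "cbarR f y h k = Sup (linear_range y d)" "Sup (linear_range y d) \<in> linear_range y d"
proof -
  let ?T = "linear_range y d"
  have T_iff: "c \<in> ?T \<longleftrightarrow> 0 \<le> c \<and> f (y + c *\<^sub>R d) - f y = ereal c * dderiv f y h k" for c
  proof -
    have "g y + c * slope y d \<le> g (y + c *\<^sub>R d)" if "0 \<le> c"
      using g_add_ge[of y "c *\<^sub>R d"] that by (simp add: slope_scaleR)
    then show ?thesis
      using y d by (auto simp: linear_range_def f_eq dderiv_eq d_def)
  qed
  have "closed ?T"
  proof -
    have "?T = {c. 0 \<le> c} \<inter> (\<Inter>l\<in>K. {c. a l \<bullet> (y + c *\<^sub>R d) \<le> b l}) \<inter>
        (\<Inter>l\<in>J. {c. u l \<bullet> (y + c *\<^sub>R d) + v l \<le> g y + c * slope y d})"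
      by (auto simp: linear_range_def D_def g_le_iff)
    then show ?thesis
      by (simp only:) (intro closed_Int closed_INT ballI closed_Collect_le continuous_intros)
  qed
  moreover have "bdd_above ?T"
  proof -
    obtain B where B: "\<And>z. z \<in> D \<Longrightarrow> norm z \<le> B"
      using bdd unfolding bounded_iff by auto
    have "c \<le> B + norm y" if "c \<in> ?T" for c
    proof -
      have "(y + c *\<^sub>R d)$h = y$h + c"
        using \<open>h \<noteq> k\<close> by (simp add: d_def unitv_nth)
      moreover have "\<bar>(y + c *\<^sub>R d)$h\<bar> \<le> B"
        using B[of "y + c *\<^sub>R d"] that component_le_norm_cart[of "y + c *\<^sub>R d" h]
        by (simp add: linear_range_def del: vector_add_component)
      moreover have "\<bar>y$h\<bar> \<le> norm y"
        by (rule component_le_norm_cart)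
      ultimately show ?thesis
        by linarith
    qed
    then show ?thesis
      by (rule bdd_aboveI)
  qed
  moreover have "?T \<noteq> {}"
    using y by (auto simp: linear_range_def intro!: exI[of _ 0])
  ultimately show Sup_in: "Sup ?T \<in> ?T"
    by (intro closed_contains_Sup)
  have "c \<le> Sup ?T" if "c \<in> ?T" for c
    using \<open>bdd_above ?T\<close> that by (rule cSup_upper[rotated])
  with Sup_in show "cbarR f y h k = Sup ?T"
    unfolding cbarR_def d_def[symmetric] T_iff[symmetric] by (intro Greatest_equality)
qed

end

definition balanced_on :: "'n set \<Rightarrow> 'n set \<Rightarrow> real^'n::finite \<Rightarrow> bool" where
  "balanced_on P M w \<longleftrightarrow> (\<forall>x\<in>P. 0 \<le> w$x) \<and> (\<forall>x\<in>M. w$x \<le> 0) \<and>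
     (\<forall>x. x \<notin> P \<longrightarrow> x \<notin> M \<longrightarrow> w$x = 0) \<and> (\<Sum>x\<in>UNIV. w$x) = 0"

definition mass :: "'n set \<Rightarrow> 'n set \<Rightarrow> real^'n::finite \<Rightarrow> real" where
  "mass P M w = (\<Sum>x\<in>P. w$x) - (\<Sum>x\<in>M. w$x)"

definition unit_mass_slice :: "'n set \<Rightarrow> 'n set \<Rightarrow> (real^'n::finite) set" where
  "unit_mass_slice P M = {w. balanced_on P M w \<and> mass P M w = 1}"

lemma balanced_on_scaleR: "0 \<le> t \<Longrightarrow> balanced_on P M w \<Longrightarrow> balanced_on P M (t *\<^sub>R w)"
  unfolding balanced_on_def by (simp add: mult_nonneg_nonpos sum_distrib_left[symmetric])

lemma mass_scaleR: "mass P M (t *\<^sub>R w) = t * mass P M w"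
  unfolding mass_def by (simp add: sum_distrib_left[symmetric] algebra_simps)

lemma balanced_on_positive_entry:
  assumes "balanced_on P M w" "w \<noteq> 0"
  obtains s where "s \<in> P" "0 < w$s"
proof (rule ccontr)
  assume "\<not> thesis"
  with that have "\<forall>x. 0 \<le> - w$x"
    using assms(1) unfolding balanced_on_def by (metis neg_0_le_iff_le not_le order_refl)
  moreover have "(\<Sum>x\<in>UNIV. - w$x) = 0"
    using assms(1) unfolding balanced_on_def by (simp add: sum_negf)
  ultimately have "\<forall>x. w$x = 0"
    using sum_nonneg_eq_0_iff[of UNIV "\<lambda>x. - w$x"] by auto
  with assms(2) show False
    by (simp add: vec_eq_iff)
qed

lemma balanced_on_transfer:
  assumes "balanced_on P M p" "P \<inter> M = {}" "s \<in> P" "c \<in> M" "e \<le> p$s" "e \<le> - p$c"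
  shows "balanced_on P M (p - e *\<^sub>R (unitv s - unitv c))"
    and "mass P M (p - e *\<^sub>R (unitv s - unitv c)) = mass P M p - 2 * e"
proof -
  have sc: "s \<notin> M" "c \<notin> P" "s \<noteq> c"
    using assms(2-4) by auto
  have nth: "(p - e *\<^sub>R (unitv s - unitv c))$x =
      p$x - e * ((if x = s then 1 else 0) - (if x = c then 1 else 0))" for x
    by (simp add: unitv_nth)
  have sum: "(\<Sum>x\<in>A. (p - e *\<^sub>R (unitv s - unitv c))$x) =
      (\<Sum>x\<in>A. p$x) - e * ((if s \<in> A then 1 else 0) - (if c \<in> A then 1 else 0))" for A
    unfolding nth by (simp add: sum_subtractf right_diff_distrib sum_distrib_left[symmetric])
  show "balanced_on P M (p - e *\<^sub>R (unitv s - unitv c))"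
    using assms(1,3-6) sc unfolding balanced_on_def sum nth by auto
  show "mass P M (p - e *\<^sub>R (unitv s - unitv c)) = mass P M p - 2 * e"
    using assms(3,4) sc unfolding mass_def sum by simp
qed

lemma abs_le_one_if_unit_mass:
  assumes "w \<in> unit_mass_slice P M" "P \<inter> M = {}"
  shows "\<bar>w$x\<bar> \<le> 1"
proof -
  from assms have pos: "\<And>x. x \<in> P \<Longrightarrow> 0 \<le> w$x" and neg: "\<And>x. x \<in> M \<Longrightarrow> w$x \<le> 0"
    and zero: "\<And>x. x \<notin> P \<Longrightarrow> x \<notin> M \<Longrightarrow> w$x = 0"
    and mass: "(\<Sum>x\<in>P. w$x) - (\<Sum>x\<in>M. w$x) = 1"
    unfolding unit_mass_slice_def balanced_on_def mass_def by auto
  have sum_P: "0 \<le> (\<Sum>x\<in>P. w$x)" and sum_M: "(\<Sum>x\<in>M. w$x) \<le> 0"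
    using pos neg by (auto intro: sum_nonneg sum_nonpos)
  consider "x \<in> P" | "x \<in> M" | "x \<notin> P" "x \<notin> M"
    by blast
  then show ?thesis
  proof cases
    case 1
    then have "w$x \<le> (\<Sum>x\<in>P. w$x)"
      using pos by (intro member_le_sum) auto
    then show ?thesis
      using 1 pos sum_M mass by auto
  next
    case 2
    then have "- w$x \<le> (\<Sum>x\<in>M. - w$x)"
      using neg by (intro member_le_sum) auto
    then show ?thesis
      using 2 neg sum_P mass by (auto simp: sum_negf)
  qed (simp add: zero)
qed

lemma compact_unit_mass_slice:
  assumes "P \<inter> M = {}"
  shows "compact (unit_mass_slice P M :: (real^'n::finite) set)"
proof -
  have "closed (unit_mass_slice P M :: (real^'n) set)"
  proof -
    have "unit_mass_slice P M = (\<Inter>x\<in>P. {w::real^'n. 0 \<le> w$x}) \<inter> (\<Inter>x\<in>M. {w. w$x \<le> 0}) \<inter>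
        (\<Inter>x\<in>- (P \<union> M). {w. w$x = 0}) \<inter> {w. (\<Sum>x\<in>UNIV. w$x) = 0} \<inter> {w. mass P M w = 1}"
      unfolding unit_mass_slice_def balanced_on_def by auto
    moreover have "continuous_on UNIV (mass P M :: real^'n \<Rightarrow> real)"
      unfolding mass_def[abs_def] by (intro continuous_intros)
    ultimately show ?thesis
      by (auto intro!: closed_Int closed_INT closed_Collect_le closed_Collect_eq continuous_intros
          continuous_on_component)
  qed
  moreover have "bounded (unit_mass_slice P M :: (real^'n) set)"
    unfolding bounded_iff
  proof (intro exI ballI)
    fix w :: "real^'n" assume "w \<in> unit_mass_slice P M"
    have "norm w \<le> (\<Sum>i\<in>UNIV. \<bar>w$i\<bar>)"
      by (rule norm_le_l1_cart)
    also have "\<dots> \<le> (\<Sum>i::'n\<in>UNIV. 1)"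
      by (rule sum_mono) (rule abs_le_one_if_unit_mass[OF \<open>w \<in> unit_mass_slice P M\<close> assms])
    finally show "norm w \<le> real CARD('n)"
      by simp
  qed
  ultimately show ?thesis
    by (simp add: compact_eq_bounded_closed)
qed

lemma mass_pos_if_balanced_on:
  assumes "balanced_on P M w" "w \<noteq> 0"
  shows "0 < mass P M w"
proof -
  obtain s where "s \<in> P" "0 < w$s"
    using balanced_on_positive_entry[OF assms] .
  moreover have "w$s \<le> (\<Sum>x\<in>P. w$x)" "(\<Sum>x\<in>M. w$x) \<le> 0"
    using assms(1) \<open>s \<in> P\<close> unfolding balanced_on_def by (auto intro: member_le_sum sum_nonpos)
  ultimately show ?thesis
    unfolding mass_def by linarith
qed

lemma weighted_sum_transfer:
  assumes "s \<in> P" "c \<notin> P"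
  shows "(\<Sum>x\<in>P. \<beta> x * (p - e *\<^sub>R (unitv s - unitv c))$x) = (\<Sum>x\<in>P. \<beta> x * p$x) - e * \<beta> s"
proof -
  have "(\<Sum>x\<in>P. \<beta> x * (p - e *\<^sub>R (unitv s - unitv c))$x) =
      (\<Sum>x\<in>P. \<beta> x * p$x - e * (\<beta> x * (unitv s - unitv c)$x))"
    by (simp add: algebra_simps)
  also have "\<dots> = (\<Sum>x\<in>P. \<beta> x * p$x) - e * (\<Sum>x\<in>P. \<beta> x * (unitv s - unitv c)$x)"
    by (simp add: sum_subtractf sum_distrib_left)
  also have "(\<Sum>x\<in>P. \<beta> x * (unitv s - unitv c)$x) = (\<Sum>x\<in>P. if x = s then \<beta> x else 0)"
    using assms(2) by (intro sum.cong) (auto simp: unitv_nth)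
  also have "\<dots> = \<beta> s"
    using assms(1) by simp
  finally show ?thesis .
qed

locale polyhedral_M_convex = max_affine +
  assumes M_convex: "M_convex f"
begin

lemma exchange:
  assumes "x \<in> D" "z \<in> D" "z$i < x$i"
  obtains j \<epsilon>0 where "x$j < z$j" "0 < \<epsilon>0"
    "\<And>\<epsilon>. \<epsilon> \<in> {0..\<epsilon>0} \<Longrightarrow>
      f (x - \<epsilon> *\<^sub>R (unitv i - unitv j)) + f (z + \<epsilon> *\<^sub>R (unitv i - unitv j)) \<le> f x + f z"
  using M_convex assms unfolding M_convex_def domR_eq by blast

lemma exchange_in_D:
  assumes "x \<in> D" "z \<in> D" "f x' + f z' \<le> f x + f z"
  shows "x' \<in> D" "z' \<in> D" "g x' + g z' \<le> g x + g z"
  using assms by (auto simp: f_eq split: if_splits)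

lemma slope_exchange:
  assumes y: "y \<in> D" and p: "p \<in> tangent_cone y" "0 < p$s"
  obtains c where "p$c < 0" "unitv s - unitv c \<in> tangent_cone y"
    "\<forall>\<^sub>F e in at_right 0. p - e *\<^sub>R (unitv s - unitv c) \<in> tangent_cone y \<and>
       slope y (p - e *\<^sub>R (unitv s - unitv c)) + e * slope y (unitv s - unitv c) \<le> slope y p"
proof -
  obtain r where r: "0 < r" "y + r *\<^sub>R p \<in> D" "g (y + r *\<^sub>R p) = g y + r * slope y p"
    using eventually_happens'[OF _ eventually_conj[OF eventually_at_right_less
          eventually_ray_expansion[OF y, of p]]] p(1)
    by auto
  define x where "x = y + r *\<^sub>R p"
  have "y$s < x$s"
    using r(1) p(2) by (simp add: x_def)
  then obtain c \<epsilon>0 where "x$c < y$c" "0 < \<epsilon>0"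
    and ex: "\<And>\<epsilon>. \<epsilon> \<in> {0..\<epsilon>0} \<Longrightarrow>
      f (x - \<epsilon> *\<^sub>R (unitv s - unitv c)) + f (y + \<epsilon> *\<^sub>R (unitv s - unitv c)) \<le> f x + f y"
    using exchange[OF _ y] r(2) unfolding x_def by blast
  define d where "d = unitv s - unitv c"
  have "p$c < 0"
    using \<open>x$c < y$c\<close> r(1) by (simp add: x_def mult_less_0_iff)
  have step: "p - e *\<^sub>R d \<in> tangent_cone y \<and> d \<in> tangent_cone y \<and>
      slope y (p - e *\<^sub>R d) + e * slope y d \<le> slope y p" if "0 < e" "e \<le> \<epsilon>0 / r" for e
  proof -
    have "r * e \<in> {0..\<epsilon>0}"
      using that r(1) by (simp add: field_simps)
    from exchange_in_D[OF _ y ex[OF this, folded d_def]] r(2)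
    have D: "x - (r * e) *\<^sub>R d \<in> D" "y + (r * e) *\<^sub>R d \<in> D"
      and sum_le: "g (x - (r * e) *\<^sub>R d) + g (y + (r * e) *\<^sub>R d) \<le> g x + g y"
      by (auto simp: x_def)
    have x_eq: "x - (r * e) *\<^sub>R d = y + r *\<^sub>R (p - e *\<^sub>R d)"
      by (simp add: x_def algebra_simps)
    have "r *\<^sub>R (p - e *\<^sub>R d) \<in> tangent_cone y" "(r * e) *\<^sub>R d \<in> tangent_cone y"
      using diff_in_tangent_cone[OF y] D unfolding x_eq by auto
    then have cone: "p - e *\<^sub>R d \<in> tangent_cone y" "d \<in> tangent_cone y"
      using r(1) \<open>0 < e\<close> by (simp_all add: tangent_cone_scaleR_iff)
    have "g y + r * slope y (p - e *\<^sub>R d) \<le> g (x - (r * e) *\<^sub>R d)"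
      using g_add_ge[of y "r *\<^sub>R (p - e *\<^sub>R d)"] r(1) by (simp add: x_eq slope_scaleR)
    moreover have "g y + r * e * slope y d \<le> g (y + (r * e) *\<^sub>R d)"
      using g_add_ge[of y "(r * e) *\<^sub>R d"] r(1) \<open>0 < e\<close> by (simp add: slope_scaleR)
    ultimately have "r * (slope y (p - e *\<^sub>R d) + e * slope y d) \<le> r * slope y p"
      using sum_le r(3) by (simp add: x_def algebra_simps)
    with cone r(1) show ?thesis
      by simp
  qed
  have "\<forall>\<^sub>F e in at_right 0. e \<in> {0<..<\<epsilon>0 / r}"
    using \<open>0 < \<epsilon>0\<close> r(1) by (intro eventually_at_right_real) simp
  then have "\<forall>\<^sub>F e in at_right 0. p - e *\<^sub>R d \<in> tangent_cone y \<and>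
      slope y (p - e *\<^sub>R d) + e * slope y d \<le> slope y p"
    by eventually_elim (use step in auto)
  moreover have "d \<in> tangent_cone y"
    using step[of "\<epsilon>0 / r"] \<open>0 < \<epsilon>0\<close> r(1) by simp
  ultimately show thesis
    using that \<open>p$c < 0\<close> unfolding d_def by blast
qed

lemma rescaled_descent:
  assumes H: "\<And>t w. 0 \<le> t \<Longrightarrow> H (t *\<^sub>R w) = t * H w"
    and r: "balanced_on P M r" "0 < mass P M r" "mass P M r < 1" "r \<in> tangent_cone y"
    and "H r \<le> H p" "H p < 0"
  obtains q where "q \<in> unit_mass_slice P M" "q \<in> tangent_cone y" "H q < H p"
proof
  define t where "t = 1 / mass P M r"
  have "1 < t"
    using r(2,3) by (simp add: t_def)
  show "t *\<^sub>R r \<in> unit_mass_slice P M"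
    using r(1,2) \<open>1 < t\<close> by (simp add: unit_mass_slice_def balanced_on_scaleR mass_scaleR t_def)
  show "t *\<^sub>R r \<in> tangent_cone y"
    using r(4) \<open>1 < t\<close> by (simp add: tangent_cone_scaleR)
  have "H (t *\<^sub>R r) = t * H r"
    using \<open>1 < t\<close> by (simp add: H)
  moreover have "t * H r \<le> t * H p"
    using \<open>H r \<le> H p\<close> \<open>1 < t\<close> by simp
  moreover have "(t - 1) * H p < 0"
    using \<open>H p < 0\<close> \<open>1 < t\<close> by (simp add: mult_pos_neg)
  ultimately show "H (t *\<^sub>R r) < H p"
    by (simp add: algebra_simps)
qed

lemma unit_mass_descent:
  assumes y: "y \<in> D" and disj: "P \<inter> M = {}"
    and \<beta>: "\<And>p c. p \<in> P \<Longrightarrow> c \<in> M \<Longrightarrow> unitv p - unitv c \<in> tangent_cone y \<Longrightarrow>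
      \<beta> p \<le> slope y (unitv p - unitv c)"
    and p: "p \<in> unit_mass_slice P M" "p \<in> tangent_cone y"
    and neg: "slope y p < (\<Sum>x\<in>P. \<beta> x * p$x)"
  defines "H \<equiv> \<lambda>w. slope y w - (\<Sum>x\<in>P. \<beta> x * w$x)"
  obtains q where "q \<in> unit_mass_slice P M" "q \<in> tangent_cone y" "H q < H p"
proof -
  have bal: "balanced_on P M p" "mass P M p = 1"
    using p(1) by (simp_all add: unit_mass_slice_def)
  then have "p \<noteq> 0"
    by (auto simp: mass_def)
  then obtain s where s: "s \<in> P" "0 < p$s"
    using balanced_on_positive_entry[OF bal(1)] by blast
  then obtain c where c: "p$c < 0" "unitv s - unitv c \<in> tangent_cone y"
    and ev: "\<forall>\<^sub>F e in at_right 0. p - e *\<^sub>R (unitv s - unitv c) \<in> tangent_cone y \<and>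
       slope y (p - e *\<^sub>R (unitv s - unitv c)) + e * slope y (unitv s - unitv c) \<le> slope y p"
    using slope_exchange[OF y p(2)] by blast
  have "c \<in> M" "c \<notin> P"
    using bal(1) c(1) disj unfolding balanced_on_def by (auto simp: not_le[symmetric])
  have "0 < min (p$s) (- p$c) / 4"
    using s(2) c(1) by simp
  then have "\<forall>\<^sub>F e in at_right 0. e \<in> {0<..<min (p$s) (- p$c) / 4}"
    by (rule eventually_at_right_real)
  from eventually_happens'[OF _ eventually_conj[OF this ev]]
  obtain e where e: "0 < e" "e \<le> p$s" "e \<le> - p$c" "4 * e \<le> p$s"
    and r_cone: "p - e *\<^sub>R (unitv s - unitv c) \<in> tangent_cone y"
    and r_slope: "slope y (p - e *\<^sub>R (unitv s - unitv c)) + e * slope y (unitv s - unitv c) \<le> slope y p"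
    by auto
  define r where "r = p - e *\<^sub>R (unitv s - unitv c)"
  have "e * \<beta> s \<le> e * slope y (unitv s - unitv c)"
    using \<beta>[OF s(1) \<open>c \<in> M\<close> c(2)] e(1) by simp
  then have "H r \<le> H p"
    using r_slope weighted_sum_transfer[OF s(1) \<open>c \<notin> P\<close>, of \<beta> p e]
    unfolding H_def r_def by linarith
  have "p$s \<le> 1"
    using abs_le_one_if_unit_mass[OF p(1) disj] by (simp add: abs_le_iff)
  have r_bal: "balanced_on P M r" and r_mass: "mass P M r = 1 - 2 * e"
    using balanced_on_transfer[OF bal(1) disj s(1) \<open>c \<in> M\<close> e(2,3)] bal(2) by (simp_all add: r_def)
  have "0 < mass P M r" "mass P M r < 1"
    using \<open>p$s \<le> 1\<close> e r_mass by linarith+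
  moreover have "H (t *\<^sub>R w) = t * H w" if "0 \<le> t" for t w
    using that by (simp add: H_def slope_scaleR sum_distrib_left algebra_simps)
  moreover have "H p < 0"
    using neg by (simp add: H_def)
  ultimately show thesis
    using rescaled_descent[of H, OF _ r_bal _ _ r_cone[folded r_def] \<open>H r \<le> H p\<close>] that by blast
qed

lemma slope_ge_weighted_sum_unit_mass:
  assumes y: "y \<in> D" and disj: "P \<inter> M = {}"
    and \<beta>: "\<And>p c. p \<in> P \<Longrightarrow> c \<in> M \<Longrightarrow> unitv p - unitv c \<in> tangent_cone y \<Longrightarrow>
      \<beta> p \<le> slope y (unitv p - unitv c)"
    and w: "w \<in> unit_mass_slice P M" "w \<in> tangent_cone y"
  shows "(\<Sum>x\<in>P. \<beta> x * w$x) \<le> slope y w"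
proof (rule ccontr)
  define H where "H w = slope y w - (\<Sum>x\<in>P. \<beta> x * w$x)" for w
  define Z where "Z = unit_mass_slice P M \<inter> tangent_cone y"
  assume w_neg: "\<not> ?thesis"
  have "compact Z"
    unfolding Z_def using compact_unit_mass_slice[OF disj] closed_tangent_cone
    by (rule compact_Int_closed)
  moreover have "Z \<noteq> {}"
    using w by (auto simp: Z_def)
  moreover have "continuous_on Z H"
    unfolding H_def by (intro continuous_intros continuous_on_slope continuous_on_component)
  ultimately have "\<exists>p\<in>Z. \<forall>z\<in>Z. H p \<le> H z"
    by (rule continuous_attains_inf)
  then obtain p where p: "p \<in> unit_mass_slice P M" "p \<in> tangent_cone y"
    and p_min: "\<And>z. z \<in> Z \<Longrightarrow> H p \<le> H z"
    by (auto simp: Z_def)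
  have "slope y p < (\<Sum>x\<in>P. \<beta> x * p$x)"
    using p_min[of w] w w_neg by (simp add: Z_def H_def)
  then obtain q where "q \<in> Z" "H q < H p"
    using unit_mass_descent[OF y disj \<beta> p] by (auto simp: Z_def H_def)
  with p_min show False
    by fastforce
qed

lemma slope_ge_weighted_sum:
  assumes y: "y \<in> D" and disj: "P \<inter> M = {}"
    and \<beta>: "\<And>p c. p \<in> P \<Longrightarrow> c \<in> M \<Longrightarrow> unitv p - unitv c \<in> tangent_cone y \<Longrightarrow>
      \<beta> p \<le> slope y (unitv p - unitv c)"
    and w: "balanced_on P M w" "w \<in> tangent_cone y"
  shows "(\<Sum>x\<in>P. \<beta> x * w$x) \<le> slope y w"
proof (cases "w = 0")
  case True
  then show ?thesis
    using slope_scaleR[of 0 y 0] by simp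
next
  case False
  define t where "t = 1 / mass P M w"
  have "0 < t"
    using mass_pos_if_balanced_on[OF w(1) False] by (simp add: t_def)
  have "t *\<^sub>R w \<in> unit_mass_slice P M"
    using w(1) \<open>0 < t\<close> mass_pos_if_balanced_on[OF w(1) False]
    by (simp add: unit_mass_slice_def balanced_on_scaleR mass_scaleR t_def)
  with \<open>0 < t\<close> have "t * (\<Sum>x\<in>P. \<beta> x * w$x) \<le> t * slope y w"
    using slope_ge_weighted_sum_unit_mass[OF y disj \<beta>, of "t *\<^sub>R w"] tangent_cone_scaleR[OF _ w(2)]
    by (simp add: slope_scaleR sum_distrib_left algebra_simps)
  with \<open>0 < t\<close> show ?thesis
    by simp
qed

lemma slope_two_transfers_gt:
  assumes y: "y \<in> D" and "\<phi> < 0" "\<phi> < \<mu>"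
    and \<phi>_le: "\<And>p c. unitv p - unitv c \<in> tangent_cone y \<Longrightarrow> \<phi> \<le> slope y (unitv p - unitv c)"
    and \<mu>_le: "\<And>c. c \<noteq> i \<Longrightarrow> unitv i - unitv c \<in> tangent_cone y \<Longrightarrow> \<mu> \<le> slope y (unitv i - unitv c)"
    and "h \<noteq> k" "i \<noteq> h" "j \<noteq> i" "0 < \<epsilon>" "\<epsilon> < lam"
    and w: "lam *\<^sub>R (unitv h - unitv k) + \<epsilon> *\<^sub>R (unitv i - unitv j) \<in> tangent_cone y"
  shows "(lam + \<epsilon>) * \<phi> < slope y (lam *\<^sub>R (unitv h - unitv k) + \<epsilon> *\<^sub>R (unitv i - unitv j))"
proof -
  define w where "w = lam *\<^sub>R (unitv h - unitv k) + \<epsilon> *\<^sub>R (unitv i - unitv j)"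
  define \<beta> where "\<beta> x = (if x = i then \<mu> else \<phi>)" for x
  have w_nth: "w$x = lam * ((if x = h then 1 else 0) - (if x = k then 1 else 0)) +
      \<epsilon> * ((if x = i then 1 else 0) - (if x = j then 1 else 0))" for x
    by (simp add: w_def unitv_nth)
  have "(\<Sum>x\<in>UNIV. w$x) = 0"
    unfolding w_nth by (simp add: sum.distrib sum_subtractf sum_distrib_left[symmetric])
  then have lower: "(\<Sum>x\<in>P. \<beta> x * w$x) \<le> slope y w"
    if "P \<inter> M = {}" "\<forall>x\<in>P. 0 \<le> w$x" "\<forall>x\<in>M. w$x \<le> 0" "\<forall>x. x \<notin> P \<longrightarrow> x \<notin> M \<longrightarrow> w$x = 0"
    for P M
  proof (intro slope_ge_weighted_sum[OF y that(1)])
    fix p c assume "p \<in> P" "c \<in> M" and cone: "unitv p - unitv c \<in> tangent_cone y"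
    with that(1) have "p \<noteq> c"
      by blast
    with \<phi>_le[OF cone] \<mu>_le[of c] cone show "\<beta> p \<le> slope y (unitv p - unitv c)"
      unfolding \<beta>_def by auto
  qed (use that w in \<open>auto simp: balanced_on_def w_def\<close>)
  \<comment> \<open>the two transfers cancel partially exactly when i = k or j = h\<close>
  consider "i \<noteq> k" "j \<noteq> h" | "i \<noteq> k" "j = h" | "i = k" "j \<noteq> h" | "i = k" "j = h"
    by blast
  then have "(lam + \<epsilon>) * \<phi> < slope y w"
  proof cases
    case 1
    with lower[of "{h, i}" "{k, j}"] assms(6-10) have "lam * \<phi> + \<epsilon> * \<mu> \<le> slope y w"
      by (auto simp: w_nth \<beta>_def algebra_simps)
    then show ?thesis
      using mult_strict_left_mono[OF \<open>\<phi> < \<mu>\<close> \<open>0 < \<epsilon>\<close>] by (simp add: algebra_simps)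
  next
    case 2
    with lower[of "{h, i}" "{k}"] assms(6-10) have "(lam - \<epsilon>) * \<phi> + \<epsilon> * \<mu> \<le> slope y w"
      by (auto simp: w_nth \<beta>_def algebra_simps)
    then show ?thesis
      using mult_strict_left_mono[OF \<open>\<phi> < \<mu>\<close> \<open>0 < \<epsilon>\<close>] mult_pos_neg[OF \<open>0 < \<epsilon>\<close> \<open>\<phi> < 0\<close>]
      by (simp add: algebra_simps)
  next
    case 3
    with lower[of "{h}" "{k, j}"] assms(6-10) have "lam * \<phi> \<le> slope y w"
      by (auto simp: w_nth \<beta>_def algebra_simps)
    then show ?thesis
      using mult_pos_neg[OF \<open>0 < \<epsilon>\<close> \<open>\<phi> < 0\<close>] by (simp add: algebra_simps)
  next
    case 4
    with lower[of "{h}" "{k}"] assms(6-10) have "(lam - \<epsilon>) * \<phi> \<le> slope y w"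
      by (auto simp: w_nth \<beta>_def algebra_simps)
    then show ?thesis
      using mult_pos_neg[OF \<open>0 < \<epsilon>\<close> \<open>\<phi> < 0\<close>] by (simp add: algebra_simps)
  qed
  then show ?thesis
    by (simp add: w_def)
qed

lemma slope_after_linear_step_gt:
  assumes y: "y \<in> D" and "\<phi> < 0" "\<phi> < \<mu>"
    and \<phi>_le: "\<And>p c. unitv p - unitv c \<in> tangent_cone y \<Longrightarrow> \<phi> \<le> slope y (unitv p - unitv c)"
    and \<mu>_le: "\<And>c. c \<noteq> i \<Longrightarrow> unitv i - unitv c \<in> tangent_cone y \<Longrightarrow> \<mu> \<le> slope y (unitv i - unitv c)"
    and "h \<noteq> k" "i \<noteq> h" "j \<noteq> i" "0 < lam"
    and step: "y + lam *\<^sub>R (unitv h - unitv k) \<in> D"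
      "g (y + lam *\<^sub>R (unitv h - unitv k)) \<le> g y + lam * \<phi>"
    and e: "unitv i - unitv j \<in> tangent_cone (y + lam *\<^sub>R (unitv h - unitv k))"
  shows "\<phi> < slope (y + lam *\<^sub>R (unitv h - unitv k)) (unitv i - unitv j)"
proof (rule ccontr)
  define d where "d = unitv h - unitv k"
  define e where "e = unitv i - unitv j"
  define yh where "yh = y + lam *\<^sub>R d"
  assume "\<not> ?thesis"
  then have "slope yh e \<le> \<phi>"
    by (simp add: yh_def d_def e_def)
  have "\<forall>\<^sub>F \<epsilon> in at_right 0. \<epsilon> \<in> {0<..<lam}"
    using \<open>0 < lam\<close> by (rule eventually_at_right_real)
  from eventually_happens'[OF _ eventually_conj[OF this eventually_ray_expansion[OF step(1), of e]]]
  obtain \<epsilon> where "0 < \<epsilon>" "\<epsilon> < lam" "yh + \<epsilon> *\<^sub>R e \<in> D"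
    and g_step: "g (yh + \<epsilon> *\<^sub>R e) = g yh + \<epsilon> * slope yh e"
    using e by (auto simp: yh_def d_def e_def)
  define w where "w = lam *\<^sub>R d + \<epsilon> *\<^sub>R e"
  have y_w: "y + w = yh + \<epsilon> *\<^sub>R e"
    by (simp add: w_def yh_def)
  have "w \<in> tangent_cone y"
    using diff_in_tangent_cone[OF y, of w] \<open>yh + \<epsilon> *\<^sub>R e \<in> D\<close> y_w by simp
  have "\<epsilon> * slope yh e \<le> \<epsilon> * \<phi>"
    using \<open>slope yh e \<le> \<phi>\<close> \<open>0 < \<epsilon>\<close> by simp
  then have "slope y w \<le> lam * \<phi> + \<epsilon> * \<phi>"
    using g_add_ge[of y w] g_step step(2) y_w by (simp add: yh_def d_def)
  moreover have "(lam + \<epsilon>) * \<phi> < slope y w"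
    using slope_two_transfers_gt[OF y \<open>\<phi> < 0\<close> \<open>\<phi> < \<mu>\<close> \<phi>_le \<mu>_le \<open>h \<noteq> k\<close> \<open>i \<noteq> h\<close> \<open>j \<noteq> i\<close>
        \<open>0 < \<epsilon>\<close> \<open>\<epsilon> < lam\<close>] \<open>w \<in> tangent_cone y\<close>
    by (simp add: w_def d_def e_def)
  ultimately show False
    by (simp add: algebra_simps)
qed

lemma dderiv_after_steepest_step_gt:
  assumes bdd: "bounded (domR f)" and y: "y \<in> domR f" and phi_neg: "phiR f y < 0"
    and i: "\<forall>j. j \<noteq> i \<longrightarrow> dderiv f y i j > phiR f y"
    and "h \<noteq> k" and hk: "dderiv f y h k = phiR f y"
    and lam: "0 < lam" "lam \<le> cbarR f y h k"
  shows "\<forall>j. j \<noteq> i \<longrightarrow> dderiv f (y + lam *\<^sub>R (unitv h - unitv k)) i j > phiR f y"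
proof (intro allI impI)
  fix j assume "j \<noteq> i"
  define d where "d = unitv h - unitv k"
  define \<phi> where "\<phi> = slope y d"
  have "y \<in> D" "bounded D"
    using y bdd by (simp_all add: domR_eq)
  have d: "d \<in> tangent_cone y" and phi: "phiR f y = ereal \<phi>"
    using hk phi_neg dderiv_eq[OF \<open>y \<in> D\<close>, of h k] by (auto simp: d_def \<phi>_def split: if_splits)
  have "\<phi> < 0"
    using phi_neg phi by simp
  have "i \<noteq> h"
    using i hk \<open>h \<noteq> k\<close> by auto
  have \<phi>_le: "\<phi> \<le> slope y (unitv p - unitv c)" if "unitv p - unitv c \<in> tangent_cone y" for p c
    using phiR_le_slope[OF \<open>y \<in> D\<close> that] phi by simp
  obtain \<mu> where "\<phi> < \<mu>"
    and \<mu>_le: "\<And>c. c \<noteq> i \<Longrightarrow> unitv i - unitv c \<in> tangent_cone y \<Longrightarrow> \<mu> \<le> slope y (unitv i - unitv c)"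
    using slope_margin[OF \<open>y \<in> D\<close>] i phi by metis
  have "cbarR f y h k = Sup (linear_range y d)" "Sup (linear_range y d) \<in> linear_range y d"
    using cbarR_eq_Sup_linear_range[OF \<open>bounded D\<close> \<open>y \<in> D\<close> \<open>h \<noteq> k\<close>] d by (simp_all add: d_def)
  then have "lam \<in> linear_range y d"
    using linear_range_downward_closed[OF \<open>y \<in> D\<close>, of "Sup (linear_range y d)" d lam] lam by simp
  then have step: "y + lam *\<^sub>R d \<in> D" "g (y + lam *\<^sub>R d) \<le> g y + lam * \<phi>"
    by (simp_all add: linear_range_def \<phi>_def)
  show "dderiv f (y + lam *\<^sub>R d) i j > phiR f y"
    using slope_after_linear_step_gt[OF \<open>y \<in> D\<close> \<open>\<phi> < 0\<close> \<open>\<phi> < \<mu>\<close> \<phi>_le \<mu>_le \<open>h \<noteq> k\<close> \<open>i \<noteq> h\<close>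
        \<open>j \<noteq> i\<close> lam(1) step[unfolded d_def]]
    by (simp add: dderiv_eq[OF step(1)[unfolded d_def]] phi d_def)
qed

end

theorem mainTheorem16:
  fixes f :: "real^'n::finite \<Rightarrow> ereal" and y :: "real^'n" and i h k :: 'n and lam :: real
  assumes "M_convex f"
    and "bounded (domR f)"
    and "y \<in> domR f"
    and "phiR f y < 0"
    and "\<forall>j. j \<noteq> i \<longrightarrow> dderiv f y i j > phiR f y"
    and "h \<noteq> k"
    and "dderiv f y h k = phiR f y"
    and "0 < lam" and "lam \<le> cbarR f y h k"
  shows "\<forall>j. j \<noteq> i \<longrightarrow> dderiv f (y + lam *\<^sub>R (unitv h - unitv k)) i j > phiR f y"
proof -
  have "polyhedral_convex f"
    using assms(1) by (simp add: M_convex_def)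
  then show ?thesis
  proof (rule polyhedral_convex_max_affine)
    fix J :: "((real^'n) \<times> real) set set" and u v and K :: "((real^'n) \<times> real) set set" and a b
    assume "finite J" "J \<noteq> {}" "finite K"
      "\<And>x. f x = (if \<forall>l\<in>K. a l \<bullet> x \<le> b l then ereal (Max ((\<lambda>l. u l \<bullet> x + v l) ` J)) else \<infinity>)"
    then interpret polyhedral_M_convex f J u v K a b
      using assms(1) by unfold_locales
    show ?thesis
      by (rule dderiv_after_steepest_step_gt[OF assms(2-9)])
  qed
qed

end
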